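(* Suppose that $2^\mu=\mu^+$ for every limit cardinal $\mu$ and that there are no Mahlo cardinals. Then for every set $A$ of regular cardinals, $\operatorname{spec}(A)\subseteq\operatorname{pcf}(A)\cup\lim(A)$. Consequently, if $2^\mu=\mu^+$ for every singular cardinal $\mu$ and there are no regular limit cardinals, then $\operatorname{spec}(A)=\operatorname{pcf}(A)$ for every set $A$ of regular cardinals.
   Context: For a set $A$ of regular cardinals, $\prod A$ is the set of functions $f$ with domain $A$ and $f(a)\in a$, ordered by pointwise domination ($f<g$ iff $f(a)<g(a)$ for all $a$). $\operatorname{spec}(A)$ is the set of regular cardinals $\kappa$ with $(\prod A,<)\geq_T\kappa$ in the Tukey order; equivalently, regular $\kappa$ such that there is $\mathcal{F}\subseteq\prod A$ of size $\kappa$ every $\kappa$-sized subset of which is unbounded in $(\prod A,<)$. $\operatorname{pcf}(A)=\{\operatorname{cf}(\prod A/D): D\text{ an ultrafilter on }A\}$, where $\prod A/D$ is ordered by $f<_Dg$ iff $\{a:f(a)<g(a)\}\in D$. $\lim(A)$ denotes the set of limit points of $A$ (ordinals $\delta$ with $A\cap\delta$ unbounded in $\delta$). *)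

theory Defs
  imports Main "HOL-Library.FuncSet"
begin

text \<open>Ordinals are modelled as elements of a well-ordered type 'k; the ordinal x is
identified with its initial segment seg x = {y. y < x}.\<close>

definition seg :: "'k::wellorder \<Rightarrow> 'k set" where
  "seg x = {y. y < x}"

definition is_cardinal :: "'k::wellorder \<Rightarrow> bool" where
  "is_cardinal x \<longleftrightarrow> (\<forall>y<x. \<not> ordIso2 (card_of (seg y)) (card_of (seg x)))"

definition infinite_cardinal :: "'k::wellorder \<Rightarrow> bool" where
  "infinite_cardinal x \<longleftrightarrow> is_cardinal x \<and> infinite (seg x)"

definition unbounded_in :: "'k::wellorder set \<Rightarrow> 'k \<Rightarrow> bool" where
  "unbounded_in S x \<longleftrightarrow> S \<subseteq> seg x \<and> (\<forall>y<x. \<exists>s\<in>S. y \<le> s)"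

definition regular :: "'k::wellorder \<Rightarrow> bool" where
  "regular x \<longleftrightarrow> infinite_cardinal x \<and>
     (\<forall>S. unbounded_in S x \<longrightarrow> ordIso2 (card_of S) (card_of (seg x)))"

definition singular :: "'k::wellorder \<Rightarrow> bool" where
  "singular x \<longleftrightarrow> infinite_cardinal x \<and> \<not> regular x"

definition successor_cardinal :: "'k::wellorder \<Rightarrow> bool" where
  "successor_cardinal x \<longleftrightarrow> is_cardinal x \<and>
     (\<exists>l<x. infinite_cardinal l \<and> ordIso2 (card_of (seg x)) (cardSuc (card_of (seg l))))"

definition limit_cardinal :: "'k::wellorder \<Rightarrow> bool" where
  "limit_cardinal x \<longleftrightarrow> infinite_cardinal x \<and>
     \<not> ordLeq2 (card_of (seg x)) (card_of (UNIV :: nat set)) \<and> \<not> successor_cardinal x"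

definition limit_point :: "'k::wellorder set \<Rightarrow> 'k \<Rightarrow> bool" where
  "limit_point S d \<longleftrightarrow> (\<exists>a\<in>S. a < d) \<and> (\<forall>y<d. \<exists>a\<in>S. y < a \<and> a < d)"

definition lim_pts :: "'k::wellorder set \<Rightarrow> 'k set" where
  "lim_pts S = {d. limit_point S d}"

definition club :: "'k::wellorder set \<Rightarrow> 'k \<Rightarrow> bool" where
  "club C x \<longleftrightarrow> C \<subseteq> seg x \<and> (\<forall>y<x. \<exists>c\<in>C. y < c) \<and>
     (\<forall>d<x. limit_point C d \<longrightarrow> d \<in> C)"

definition stationary :: "'k::wellorder set \<Rightarrow> 'k \<Rightarrow> bool" where
  "stationary S x \<longleftrightarrow> S \<subseteq> seg x \<and> (\<forall>C. club C x \<longrightarrow> S \<inter> C \<noteq> {})"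

definition mahlo :: "'k::wellorder \<Rightarrow> bool" where
  "mahlo x \<longleftrightarrow> regular x \<and> limit_cardinal x \<and> stationary {l. l < x \<and> regular l} x"

definition prodA :: "'k::wellorder set \<Rightarrow> ('k \<Rightarrow> 'k) set" where
  "prodA A = PiE A seg"

definition bounded_in_prod :: "'k::wellorder set \<Rightarrow> ('k \<Rightarrow> 'k) set \<Rightarrow> bool" where
  "bounded_in_prod A G \<longleftrightarrow> (\<exists>h\<in>prodA A. \<forall>g\<in>G. \<forall>a\<in>A. g a < h a)"

definition spec :: "'k::wellorder set \<Rightarrow> 'k set" where
  "spec A = {\<kappa>. regular \<kappa> \<and>
     (\<exists>F. F \<subseteq> prodA A \<and> ordIso2 (card_of F) (card_of (seg \<kappa>)) \<and>
        (\<forall>G. G \<subseteq> F \<and> ordIso2 (card_of G) (card_of (seg \<kappa>)) \<longrightarrow> \<not> bounded_in_prod A G))}"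

definition ultrafilter_on :: "'a set set \<Rightarrow> 'a set \<Rightarrow> bool" where
  "ultrafilter_on D A \<longleftrightarrow> D \<subseteq> Pow A \<and> A \<in> D \<and> {} \<notin> D \<and>
     (\<forall>X\<in>D. \<forall>Y\<in>D. X \<inter> Y \<in> D) \<and>
     (\<forall>X\<in>D. \<forall>Y. X \<subseteq> Y \<and> Y \<subseteq> A \<longrightarrow> Y \<in> D) \<and>
     (\<forall>X. X \<subseteq> A \<longrightarrow> X \<in> D \<or> A - X \<in> D)"

definition cofinal_mod :: "'k::wellorder set set \<Rightarrow> 'k set \<Rightarrow> ('k \<Rightarrow> 'k) set \<Rightarrow> bool" where
  "cofinal_mod D A C \<longleftrightarrow> C \<subseteq> prodA A \<and> (\<forall>f\<in>prodA A. \<exists>g\<in>C. {a\<in>A. f a < g a} \<in> D)"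

definition pcf :: "'k::wellorder set \<Rightarrow> 'k set" where
  "pcf A = {\<kappa>. is_cardinal \<kappa> \<and> (\<exists>D. ultrafilter_on D A \<and>
     (\<exists>C. cofinal_mod D A C \<and> ordIso2 (card_of C) (card_of (seg \<kappa>))) \<and>
     (\<forall>C. cofinal_mod D A C \<longrightarrow> ordLeq2 (card_of (seg \<kappa>)) (card_of C)))}"

definition two_pow_is_succ :: "'k::wellorder \<Rightarrow> bool" where
  "two_pow_is_succ \<mu> \<longleftrightarrow> ordIso2 (card_of (Pow (seg \<mu>))) (cardSuc (card_of (seg \<mu>)))"

end

theory Submission
  imports Defs
begin

text \<open>
  Let \<kappa> \<in> spec(A) be neither in A (those are in pcf(A) via principal ultrafilters) nor a limit
  point of A, witnessed by F \<subseteq> \<Pi>A. The least \<delta> below which no \<kappa>-sized subfamily of F is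
  bounded is a limit point l < \<kappa> of A, and F has \<kappa> different restrictions to A \<inter> l; hence
  \<kappa> \<le> 2^|l| = l^+, i.e. \<kappa> = l^+. Extend the tails of A \<inter> l to an ultrafilter D. The functions
  vanishing from l on are cofinal in \<Pi>A/D and there are at most 2^|l| of them. As l is not Mahlo,
  some cofinal subset E of l has no regular limit points above some x < l; at every a \<in> A above x
  the functions indexed below E \<inter> a are then bounded, so no family of |l| functions is cofinal.
  Thus cf(\<Pi>A/D) = l^+ = \<kappa>.

  Conversely, a cofinal family of minimal size \<kappa> in \<Pi>A/D can be made \<le>_D-increasing; its
  unbounded subfamilies are again cofinal, so \<kappa> is regular and no \<kappa>-sized subfamily is
  bounded. Under the hypotheses of the second part limit points of A, which are limit cardinals,
  are singular and so not in spec(A).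
\<close>

unbundle cardinal_syntax

subsection \<open>Cardinals as elements of a well-order\<close>

lemma card_of_seg_mono: "(x::'k::wellorder) \<le> y \<Longrightarrow> |seg x| \<le>o |seg y|"
  by (rule card_of_mono1) (auto simp: seg_def)

lemma card_of_seg_less: "is_cardinal (y::'k::wellorder) \<Longrightarrow> x < y \<Longrightarrow> |seg x| <o |seg y|"
  unfolding is_cardinal_def using card_of_seg_mono[of x y] ordLeq_iff_ordLess_or_ordIso by force

lemma regular_infinite_cardinal: "regular a \<Longrightarrow> infinite_cardinal a"
  unfolding regular_def by blast

lemma regular_is_cardinal: "regular a \<Longrightarrow> is_cardinal a"
  unfolding regular_def infinite_cardinal_def by blast

lemma infinite_cardinal_no_max:
  assumes "infinite_cardinal (a::'k::wellorder)" "x < a"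
  shows "\<exists>z. x < z \<and> z < a"
proof (rule ccontr)
  assume "\<not> ?thesis"
  hence seg_a: "seg a = insert x (seg x)" using assms(2) by (auto simp: seg_def) (meson linorder_neqE)
  have "infinite (seg x)" using assms(1) seg_a unfolding infinite_cardinal_def by auto
  hence "|{x} \<union> seg x| \<le>o |seg x|"
    by (intro card_of_Un_ordLeq_infinite_Field)
       (auto simp: Field_card_of card_of_card_order_on ordLeq_refl card_of_Well_order
             intro!: card_of_singl_ordLeq)
  hence "|seg a| \<le>o |seg x|" using seg_a by simp
  moreover have "|seg x| \<le>o |seg a|" using card_of_seg_mono[of x a] assms(2) by simp
  ultimately have "|seg x| =o |seg a|" using ordIso_iff_ordLeq by blast
  thus False using assms unfolding infinite_cardinal_def is_cardinal_def by blast
qed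

definition next_elem :: "'k::wellorder \<Rightarrow> 'k" where
  "next_elem x = (LEAST z. x < z)"

lemma next_elem_bounds:
  assumes "infinite_cardinal (a::'k::wellorder)" "x < a"
  shows "x < next_elem x" "next_elem x < a"
proof -
  obtain z where z: "x < z" "z < a" using infinite_cardinal_no_max[OF assms] by blast
  show "x < next_elem x" unfolding next_elem_def by (rule LeastI[of _ z]) (rule z(1))
  have "next_elem x \<le> z" unfolding next_elem_def by (rule Least_le) (rule z(1))
  thus "next_elem x < a" using z by simp
qed

definition bottom_elem :: "'k::wellorder" where
  "bottom_elem = (LEAST x. True)"

lemma bottom_elem_less: "infinite_cardinal (a::'k::wellorder) \<Longrightarrow> bottom_elem < a"
proof -
  assume "infinite_cardinal a"
  hence "seg a \<noteq> {}" unfolding infinite_cardinal_def by auto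
  then obtain y where "y < a" by (auto simp: seg_def)
  moreover have "bottom_elem \<le> y" unfolding bottom_elem_def by (rule Least_le) simp
  ultimately show "bottom_elem < a" by simp
qed

lemma regular_bounded_image:
  fixes a :: "'k::wellorder"
  assumes reg: "regular a" and small: "|I| <o |seg a|" and below: "\<forall>i\<in>I. f i < a"
  shows "\<exists>t<a. \<forall>i\<in>I. f i < t"
proof (rule ccontr)
  assume unbounded: "\<not> ?thesis"
  have "\<exists>i\<in>I. y \<le> f i" if "y < a" for y
  proof -
    from unbounded that have "\<not> (\<forall>i\<in>I. f i < y)" by blast
    thus ?thesis by (auto simp: not_less)
  qed
  hence "unbounded_in (f ` I) a" using below unfolding unbounded_in_def seg_def by blast
  hence "|f ` I| =o |seg a|" using reg unfolding regular_def by blast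
  thus False using ordLeq_ordLess_trans[OF card_of_image small] not_ordLess_ordIso by blast
qed

lemma regular_UN_less:
  fixes \<kappa> :: "'k::wellorder" and F :: "'i \<Rightarrow> 'b set"
  assumes reg: "regular \<kappa>" and I: "|I| <o |seg \<kappa>|" and F: "\<forall>i\<in>I. |F i| <o |seg \<kappa>|"
  shows "|\<Union>i\<in>I. F i| <o |seg \<kappa>|"
proof (rule ccontr)
  assume "\<not> ?thesis"
  hence le: "|seg \<kappa>| \<le>o |\<Union>i\<in>I. F i|"
    using not_ordLess_iff_ordLeq[OF card_of_Well_order card_of_Well_order] by blast
  have "seg \<kappa> \<noteq> {}" using reg unfolding regular_def infinite_cardinal_def by auto
  then obtain f where f: "f ` (\<Union>i\<in>I. F i) = seg \<kappa>" using iffD2[OF card_of_ordLeq2 le] by blast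
  have "\<exists>t<\<kappa>. \<forall>u\<in>F i. f u < t" if "i \<in> I" for i
  proof (rule regular_bounded_image[OF reg])
    show "|F i| <o |seg \<kappa>|" using F that by blast
    show "\<forall>u\<in>F i. f u < \<kappa>" using f that by (auto simp: seg_def)
  qed
  then obtain t where t: "\<forall>i\<in>I. t i < \<kappa> \<and> (\<forall>u\<in>F i. f u < t i)" by metis
  have "unbounded_in (t ` I) \<kappa>"
    unfolding unbounded_in_def
  proof (intro conjI allI impI)
    show "t ` I \<subseteq> seg \<kappa>" using t by (auto simp: seg_def)
    fix y assume "y < \<kappa>"
    hence "y \<in> f ` (\<Union>i\<in>I. F i)" using f by (simp add: seg_def)
    then obtain i u where "i \<in> I" "u \<in> F i" "y = f u" by blast
    hence "y \<le> t i" using t less_imp_le by blast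
    thus "\<exists>s\<in>t ` I. y \<le> s" using \<open>i \<in> I\<close> by blast
  qed
  hence "|t ` I| =o |seg \<kappa>|" using reg unfolding regular_def by blast
  thus False using ordLeq_ordLess_trans[OF card_of_image I] not_ordLess_ordIso by blast
qed

lemma regular_pigeonhole:
  fixes \<kappa> :: "'k::wellorder"
  assumes reg: "regular \<kappa>" and G: "|G| =o |seg \<kappa>|" and S: "|S| <o |seg \<kappa>|"
    and \<phi>: "\<forall>g\<in>G. \<phi> g \<in> S"
  shows "\<exists>s\<in>S. |{g\<in>G. \<phi> g = s}| =o |seg \<kappa>|"
proof (rule ccontr)
  assume no_large_fiber: "\<not> ?thesis"
  have "|{g\<in>G. \<phi> g = s}| <o |seg \<kappa>|" if "s \<in> S" for s
  proof -
    have "|{g\<in>G. \<phi> g = s}| \<le>o |seg \<kappa>|"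
      using ordLeq_ordIso_trans[OF card_of_mono1[of "{g\<in>G. \<phi> g = s}" G] G] by blast
    thus ?thesis using no_large_fiber that ordLeq_iff_ordLess_or_ordIso by blast
  qed
  hence "|\<Union>s\<in>S. {g\<in>G. \<phi> g = s}| <o |seg \<kappa>|" by (intro regular_UN_less[OF reg S]) blast
  moreover have "(\<Union>s\<in>S. {g\<in>G. \<phi> g = s}) = G" using \<phi> by auto
  ultimately have "|G| <o |seg \<kappa>|" by simp
  thus False using G not_ordLess_ordIso by blast
qed

subsection \<open>Limit points of sets of regular cardinals\<close>

lemma limit_point_card_of_seg_less:
  fixes A :: "'k::wellorder set"
  assumes regA: "\<forall>a\<in>A. regular a" and lp: "limit_point A d" and "y < d"
  shows "\<exists>a\<in>A. a < d \<and> |seg y| <o |seg a|"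
proof -
  obtain a1 where a1: "a1 \<in> A" "y < a1" "a1 < d" using lp \<open>y < d\<close> unfolding limit_point_def by blast
  obtain a2 where a2: "a2 \<in> A" "a1 < a2" "a2 < d" using lp a1(3) unfolding limit_point_def by blast
  have "|seg y| \<le>o |seg a1|" by (rule card_of_seg_mono[OF less_imp_le[OF a1(2)]])
  also have "|seg a1| <o |seg a2|" using card_of_seg_less[OF regular_is_cardinal a2(2)] regA a2(1) by blast
  finally show ?thesis using a2 by blast
qed

lemma limit_point_limit_cardinal:
  fixes A :: "'k::wellorder set"
  assumes regA: "\<forall>a\<in>A. regular a" and lp: "limit_point A d"
  shows "limit_cardinal d"
proof -
  note above = limit_point_card_of_seg_less[OF regA lp]
  have to_d: "|seg y| <o |seg d|" if y: "y < d" for y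
  proof -
    obtain a where a: "a < d" "|seg y| <o |seg a|" using above[OF y] by blast
    note a(2)
    also have "|seg a| \<le>o |seg d|" by (rule card_of_seg_mono[OF less_imp_le[OF a(1)]])
    finally show ?thesis .
  qed
  obtain a0 where a0: "a0 \<in> A" "a0 < d" using lp unfolding limit_point_def by blast
  have inf_a0: "infinite (seg a0)"
    using regA a0 regular_infinite_cardinal unfolding infinite_cardinal_def by blast
  have "is_cardinal d" unfolding is_cardinal_def using to_d not_ordLess_ordIso by blast
  moreover have "seg a0 \<subseteq> seg d" using a0(2) by (auto simp: seg_def)
  hence "infinite (seg d)" using inf_a0 finite_subset by blast
  moreover have "\<not> |seg d| \<le>o |UNIV :: nat set|"
  proof -
    have "|UNIV :: nat set| \<le>o |seg a0|" using inf_a0 infinite_iff_card_of_nat by blast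
    also have "|seg a0| <o |seg d|" by (rule to_d[OF a0(2)])
    finally show ?thesis using not_ordLess_ordLeq by blast
  qed
  moreover have "\<not> successor_cardinal d"
  proof
    assume "successor_cardinal d"
    then obtain l where l: "l < d" "|seg d| =o cardSuc |seg l|"
      unfolding successor_cardinal_def by blast
    obtain a where a: "a < d" "|seg l| <o |seg a|" using above[OF l(1)] by blast
    have "cardSuc |seg l| \<le>o |seg a|"
      using a(2) cardSuc_ordLess_ordLeq[OF card_of_Card_order card_of_Card_order] by blast
    also have "|seg a| <o |seg d|" by (rule to_d[OF a(1)])
    finally have "cardSuc |seg l| <o |seg d|" .
    with ordIso_symmetric[OF l(2)] show False using not_ordLess_ordIso by blast
  qed
  ultimately show ?thesis unfolding limit_cardinal_def infinite_cardinal_def by simp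
qed

lemma restrict_in_prodA: "(\<forall>a\<in>A. h a < a) \<Longrightarrow> restrict h A \<in> prodA A"
  unfolding prodA_def by (auto simp: seg_def)

lemma prodA_less: "g \<in> prodA A \<Longrightarrow> a \<in> A \<Longrightarrow> g a < a"
  unfolding prodA_def by (auto simp: seg_def)

lemma bottom_in_prodA: "\<forall>a\<in>A. regular a \<Longrightarrow> restrict (\<lambda>a. bottom_elem) A \<in> prodA A"
  by (rule restrict_in_prodA) (auto intro: bottom_elem_less regular_infinite_cardinal)

lemma card_of_restrict_prodA_le_Pow:
  fixes A :: "'k::wellorder set"
  assumes "F \<subseteq> prodA A"
  shows "|(\<lambda>g. restrict g (A \<inter> seg l)) ` F| \<le>o |Pow (seg l \<times> seg l)|"
proof -
  define graph where "graph r = {(a, r a) | a. a \<in> A \<inter> seg l}" for r :: "'k \<Rightarrow> 'k"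
  have "inj_on graph (extensional (A \<inter> seg l))"
  proof (rule inj_onI)
    fix r1 r2 assume r1: "r1 \<in> extensional (A \<inter> seg l)" and r2: "r2 \<in> extensional (A \<inter> seg l)"
      and same: "graph r1 = graph r2"
    show "r1 = r2"
    proof (rule extensionalityI[OF r1 r2])
      fix a assume "a \<in> A \<inter> seg l"
      hence "(a, r1 a) \<in> graph r2" using same unfolding graph_def by blast
      thus "r1 a = r2 a" unfolding graph_def by blast
    qed
  qed
  hence "inj_on graph ((\<lambda>g. restrict g (A \<inter> seg l)) ` F)" by (rule inj_on_subset) auto
  moreover have "graph ` (\<lambda>g. restrict g (A \<inter> seg l)) ` F \<subseteq> Pow (seg l \<times> seg l)"
  proof
    fix X assume "X \<in> graph ` (\<lambda>g. restrict g (A \<inter> seg l)) ` F"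
    then obtain g where g: "g \<in> F" "X = graph (restrict g (A \<inter> seg l))" by blast
    have "g a < l" if "a \<in> A" "a < l" for a
      using prodA_less[of g A a] assms g(1) that order.strict_trans by blast
    thus "X \<in> Pow (seg l \<times> seg l)" using g(2) unfolding graph_def by (auto simp: seg_def)
  qed
  ultimately show ?thesis using card_of_ordLeq by blast
qed

subsection \<open>Elements of the spectrum that are neither in A nor limit points of A\<close>

definition bounded_in_prod_below :: "'k::wellorder set \<Rightarrow> 'k \<Rightarrow> ('k \<Rightarrow> 'k) set \<Rightarrow> bool" where
  "bounded_in_prod_below A \<delta> G \<longleftrightarrow> (\<exists>h\<in>prodA A. \<forall>g\<in>G. \<forall>a\<in>A. a < \<delta> \<longrightarrow> g a < h a)"

lemma bounded_in_prod_below_imp_bounded_in_prod: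
  fixes \<kappa> :: "'k::wellorder"
  assumes regA: "\<forall>a\<in>A. regular a" and "\<kappa> \<notin> A" and GA: "G \<subseteq> prodA A"
    and G: "|G| \<le>o |seg \<kappa>|" and "bounded_in_prod_below A \<kappa> G"
  shows "bounded_in_prod A G"
proof -
  obtain h where h: "h \<in> prodA A" "\<forall>g\<in>G. \<forall>a\<in>A. a < \<kappa> \<longrightarrow> g a < h a"
    using \<open>bounded_in_prod_below A \<kappa> G\<close> unfolding bounded_in_prod_below_def by blast
  have "\<exists>t<a. \<forall>g\<in>G. g a < t" if a: "a \<in> A" "\<kappa> < a" for a
  proof (rule regular_bounded_image)
    show "regular a" using regA a by blast
    show "|G| <o |seg a|"
      using ordLeq_ordLess_trans[OF G card_of_seg_less[OF regular_is_cardinal a(2)]] regA a by blast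
    show "\<forall>g\<in>G. g a < a" using GA a prodA_less by blast
  qed
  then obtain t where t: "\<forall>a\<in>A. \<kappa> < a \<longrightarrow> t a < a \<and> (\<forall>g\<in>G. g a < t a)" by metis
  define h' where "h' = restrict (\<lambda>a. if a < \<kappa> then h a else t a) A"
  have above: "\<kappa> < a" if "a \<in> A" "\<not> a < \<kappa>" for a
    using \<open>\<kappa> \<notin> A\<close> that by (metis linorder_neqE)
  have "h' \<in> prodA A" unfolding h'_def
  proof (rule restrict_in_prodA, intro ballI)
    fix a assume "a \<in> A"
    thus "(if a < \<kappa> then h a else t a) < a" using h(1) prodA_less t above by auto
  qed
  moreover have "\<forall>g\<in>G. \<forall>a\<in>A. g a < h' a" unfolding h'_def using h(2) t above by auto
  ultimately show ?thesis unfolding bounded_in_prod_def by blast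
qed

text \<open>Pigeonhole at the regular \<kappa> gives a \<kappa>-sized subfamily with a constant value at y, which
  the bound can then exceed at y.\<close>
lemma bounded_in_prod_below_past_elem:
  fixes \<kappa> :: "'k::wellorder"
  assumes regA: "\<forall>a\<in>A. regular a" and reg: "regular \<kappa>" and GA: "G \<subseteq> prodA A"
    and G: "|G| =o |seg \<kappa>|" and "y \<in> A" "y < \<kappa>" and "bounded_in_prod_below A y G"
  shows "\<exists>G'\<subseteq>G. |G'| =o |seg \<kappa>| \<and> (\<exists>h\<in>prodA A. \<forall>g\<in>G'. \<forall>a\<in>A. a \<le> y \<longrightarrow> g a < h a)"
proof -
  obtain h where h: "h \<in> prodA A" "\<forall>g\<in>G. \<forall>a\<in>A. a < y \<longrightarrow> g a < h a"
    using \<open>bounded_in_prod_below A y G\<close> unfolding bounded_in_prod_below_def by blast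
  have y: "infinite_cardinal y" using regA \<open>y \<in> A\<close> regular_infinite_cardinal by blast
  have "|seg y| <o |seg \<kappa>|" by (rule card_of_seg_less[OF regular_is_cardinal[OF reg] \<open>y < \<kappa>\<close>])
  moreover have "\<forall>g\<in>G. g y \<in> seg y" using GA \<open>y \<in> A\<close> prodA_less unfolding seg_def by blast
  ultimately obtain v where v: "v \<in> seg y" "|{g\<in>G. g y = v}| =o |seg \<kappa>|"
    using regular_pigeonhole[OF reg G, of "seg y" "\<lambda>g. g y"] by blast
  define h' where "h' = restrict (\<lambda>a. if a = y then next_elem v else h a) A"
  have v_y: "v < y" using v(1) by (simp add: seg_def)
  have "h' \<in> prodA A" unfolding h'_def
  proof (rule restrict_in_prodA, intro ballI)
    fix a assume "a \<in> A"
    thus "(if a = y then next_elem v else h a) < a"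
      using prodA_less[OF h(1)] next_elem_bounds(2)[OF y v_y] by simp
  qed
  moreover have "\<forall>g\<in>{g\<in>G. g y = v}. \<forall>a\<in>A. a \<le> y \<longrightarrow> g a < h' a"
  proof (intro ballI impI)
    fix g a assume g: "g \<in> {g\<in>G. g y = v}" and a: "a \<in> A" "a \<le> y"
    show "g a < h' a"
    proof (cases "a = y")
      case True
      thus ?thesis unfolding h'_def using g a(1) next_elem_bounds(1)[OF y v_y] by simp
    next
      case False
      thus ?thesis unfolding h'_def using g a h(2) by simp
    qed
  qed
  moreover have "{g\<in>G. g y = v} \<subseteq> G" by blast
  ultimately show ?thesis using v(2) by blast
qed

lemma bounded_in_prod_below_across_gap:
  fixes \<kappa> :: "'k::wellorder"
  assumes regA: "\<forall>a\<in>A. regular a" and reg: "regular \<kappa>" and GA: "G \<subseteq> prodA A"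
    and G: "|G| =o |seg \<kappa>|" and "y < \<kappa>" and gap: "\<forall>a\<in>A. \<not> (y < a \<and> a < \<delta>)"
    and bounded: "bounded_in_prod_below A y G"
  shows "\<exists>G'\<subseteq>G. |G'| =o |seg \<kappa>| \<and> bounded_in_prod_below A \<delta> G'"
proof -
  have le_y: "a \<le> y" if "a \<in> A" "a < \<delta>" for a using gap that not_less by blast
  show ?thesis
  proof (cases "y \<in> A")
    case False
    obtain h where h: "h \<in> prodA A" "\<forall>g\<in>G. \<forall>a\<in>A. a < y \<longrightarrow> g a < h a"
      using bounded unfolding bounded_in_prod_below_def by blast
    have "\<forall>g\<in>G. \<forall>a\<in>A. a < \<delta> \<longrightarrow> g a < h a"
    proof (intro ballI impI)
      fix g a assume "g \<in> G" "a \<in> A" "a < \<delta>"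
      moreover have "a \<noteq> y" using False \<open>a \<in> A\<close> by auto
      ultimately show "g a < h a" using h(2) le_y order.order_iff_strict by blast
    qed
    hence "bounded_in_prod_below A \<delta> G" unfolding bounded_in_prod_below_def using h(1) by blast
    with G show ?thesis by blast
  next
    case True
    then obtain G' h where "G' \<subseteq> G" "|G'| =o |seg \<kappa>|" "h \<in> prodA A"
      and h: "\<forall>g\<in>G'. \<forall>a\<in>A. a \<le> y \<longrightarrow> g a < h a"
      using bounded_in_prod_below_past_elem[OF regA reg GA G True \<open>y < \<kappa>\<close> bounded] by blast
    moreover have "bounded_in_prod_below A \<delta> G'"
      unfolding bounded_in_prod_below_def using \<open>h \<in> prodA A\<close> h le_y by blast
    ultimately show ?thesis by blast
  qed
qed

lemma bounded_in_prod_below_if_few_restrictions: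
  fixes \<kappa> :: "'k::wellorder"
  assumes regA: "\<forall>a\<in>A. regular a" and reg: "regular \<kappa>" and FA: "F \<subseteq> prodA A"
    and F: "|F| =o |seg \<kappa>|" and few: "|(\<lambda>g. restrict g (A \<inter> seg l)) ` F| <o |seg \<kappa>|"
  shows "\<exists>G\<subseteq>F. |G| =o |seg \<kappa>| \<and> bounded_in_prod_below A l G"
proof -
  obtain r where r: "r \<in> (\<lambda>g. restrict g (A \<inter> seg l)) ` F"
    and G: "|{g\<in>F. restrict g (A \<inter> seg l) = r}| =o |seg \<kappa>|"
    using regular_pigeonhole[OF reg F few, of "\<lambda>g. restrict g (A \<inter> seg l)"] by blast
  define h where "h = restrict (\<lambda>a. if a < l then next_elem (r a) else bottom_elem) A"
  have r_less: "r a < a" if "a \<in> A" "a < l" for a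
  proof -
    obtain g where "g \<in> F" "r = restrict g (A \<inter> seg l)" using r by blast
    thus ?thesis using FA that prodA_less[of g A a] by (auto simp: seg_def)
  qed
  have "h \<in> prodA A" unfolding h_def
  proof (rule restrict_in_prodA, intro ballI)
    fix a assume "a \<in> A"
    hence a: "infinite_cardinal a" using regA regular_infinite_cardinal by blast
    show "(if a < l then next_elem (r a) else bottom_elem) < a"
      using r_less[OF \<open>a \<in> A\<close>] next_elem_bounds(2)[OF a] bottom_elem_less[OF a] by simp
  qed
  moreover have "\<forall>g\<in>{g\<in>F. restrict g (A \<inter> seg l) = r}. \<forall>a\<in>A. a < l \<longrightarrow> g a < h a"
  proof (intro ballI impI)
    fix g a assume g: "g \<in> {g\<in>F. restrict g (A \<inter> seg l) = r}" and a: "a \<in> A" "a < l"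
    have "r a = g a" using g a by (auto simp: seg_def)
    moreover have "infinite_cardinal a" using regA a(1) regular_infinite_cardinal by blast
    ultimately show "g a < h a" unfolding h_def
      using a r_less[OF a] next_elem_bounds(1) by simp
  qed
  ultimately have "bounded_in_prod_below A l {g\<in>F. restrict g (A \<inter> seg l) = r}"
    unfolding bounded_in_prod_below_def by blast
  moreover have "{g\<in>F. restrict g (A \<inter> seg l) = r} \<subseteq> F" by blast
  ultimately show ?thesis using G by blast
qed

definition large_subfamilies_unbounded_below ::
    "'k::wellorder set \<Rightarrow> 'k \<Rightarrow> ('k \<Rightarrow> 'k) set \<Rightarrow> 'k \<Rightarrow> bool" where
  "large_subfamilies_unbounded_below A \<kappa> F \<delta> \<longleftrightarrow>
     (\<forall>G\<subseteq>F. |G| =o |seg \<kappa>| \<longrightarrow> \<not> bounded_in_prod_below A \<delta> G)"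

lemma least_large_subfamilies_unbounded_below_limit_point:
  fixes \<kappa> :: "'k::wellorder"
  assumes regA: "\<forall>a\<in>A. regular a" and reg: "regular \<kappa>" and FA: "F \<subseteq> prodA A"
    and F: "|F| =o |seg \<kappa>|" and "l \<le> \<kappa>" and unb: "large_subfamilies_unbounded_below A \<kappa> F l"
    and least: "\<forall>y<l. \<not> large_subfamilies_unbounded_below A \<kappa> F y"
  shows "limit_point A l"
  unfolding limit_point_def
proof
  show "\<exists>a\<in>A. a < l"
  proof (rule ccontr)
    assume "\<not> (\<exists>a\<in>A. a < l)"
    hence "bounded_in_prod_below A l F"
      using bottom_in_prodA[OF regA] unfolding bounded_in_prod_below_def by blast
    thus False using unb F unfolding large_subfamilies_unbounded_below_def by blast
  qed
  show "\<forall>y<l. \<exists>a\<in>A. y < a \<and> a < l"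
  proof (rule ccontr)
    assume "\<not> (\<forall>y<l. \<exists>a\<in>A. y < a \<and> a < l)"
    then obtain y where "y < l" and gap: "\<forall>a\<in>A. \<not> (y < a \<and> a < l)" by blast
    then obtain G where G: "G \<subseteq> F" "|G| =o |seg \<kappa>|" "bounded_in_prod_below A y G"
      using least unfolding large_subfamilies_unbounded_below_def by blast
    have "y < \<kappa>" using \<open>y < l\<close> \<open>l \<le> \<kappa>\<close> by simp
    then obtain G' where "G' \<subseteq> G" "|G'| =o |seg \<kappa>|" "bounded_in_prod_below A l G'"
      using bounded_in_prod_below_across_gap[OF regA reg _ G(2) _ gap G(3)] G(1) FA by blast
    thus False using unb G(1) unfolding large_subfamilies_unbounded_below_def by blast
  qed
qed

lemma spec_not_lim_pts_le_Pow:
  fixes \<kappa> :: "'k::wellorder"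
  assumes regA: "\<forall>a\<in>A. regular a" and "\<kappa> \<in> spec A" and "\<kappa> \<notin> A" and "\<not> limit_point A \<kappa>"
  shows "\<exists>l<\<kappa>. limit_point A l \<and> |seg \<kappa>| \<le>o |Pow (seg l \<times> seg l)|"
proof -
  obtain F where reg: "regular \<kappa>" and FA: "F \<subseteq> prodA A" and F: "|F| =o |seg \<kappa>|"
    and unb: "\<forall>G. G \<subseteq> F \<and> |G| =o |seg \<kappa>| \<longrightarrow> \<not> bounded_in_prod A G"
    using \<open>\<kappa> \<in> spec A\<close> unfolding spec_def by blast
  let ?unb = "large_subfamilies_unbounded_below A \<kappa> F"
  have "?unb \<kappa>" unfolding large_subfamilies_unbounded_below_def
  proof (intro allI impI notI)
    fix G assume G: "G \<subseteq> F" "|G| =o |seg \<kappa>|" and "bounded_in_prod_below A \<kappa> G"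
    hence "bounded_in_prod A G"
      using bounded_in_prod_below_imp_bounded_in_prod[OF regA \<open>\<kappa> \<notin> A\<close>] FA ordIso_iff_ordLeq by blast
    thus False using unb G by blast
  qed
  define l where "l = (LEAST \<delta>. ?unb \<delta>)"
  have unb_l: "?unb l" unfolding l_def by (rule LeastI) fact
  have "l \<le> \<kappa>" unfolding l_def by (rule Least_le) fact
  have "limit_point A l"
    using least_large_subfamilies_unbounded_below_limit_point[OF regA reg FA F \<open>l \<le> \<kappa>\<close> unb_l]
      not_less_Least unfolding l_def by blast
  moreover have "l < \<kappa>"
    using \<open>l \<le> \<kappa>\<close> \<open>limit_point A l\<close> \<open>\<not> limit_point A \<kappa>\<close> by (cases "l = \<kappa>") auto
  moreover have "|seg \<kappa>| \<le>o |(\<lambda>g. restrict g (A \<inter> seg l)) ` F|"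
  proof (rule ccontr)
    assume "\<not> ?thesis"
    hence "|(\<lambda>g. restrict g (A \<inter> seg l)) ` F| <o |seg \<kappa>|"
      using not_ordLess_iff_ordLeq[OF card_of_Well_order card_of_Well_order] by blast
    thus False using bounded_in_prod_below_if_few_restrictions[OF regA reg FA F] unb_l
      unfolding large_subfamilies_unbounded_below_def by blast
  qed
  ultimately show ?thesis using ordLeq_transitive card_of_restrict_prodA_le_Pow[OF FA] by blast
qed

subsection \<open>Ultrafilters\<close>

definition proper_filter_on :: "'a set set \<Rightarrow> 'a set \<Rightarrow> bool" where
  "proper_filter_on D A \<longleftrightarrow> D \<subseteq> Pow A \<and> A \<in> D \<and> {} \<notin> D \<and> (\<forall>X\<in>D. \<forall>Y\<in>D. X \<inter> Y \<in> D) \<and>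
     (\<forall>X\<in>D. \<forall>Y. X \<subseteq> Y \<and> Y \<subseteq> A \<longrightarrow> Y \<in> D)"

lemma ultrafilter_on_iff:
  "ultrafilter_on D A \<longleftrightarrow> proper_filter_on D A \<and> (\<forall>X. X \<subseteq> A \<longrightarrow> X \<in> D \<or> A - X \<in> D)"
  unfolding ultrafilter_on_def proper_filter_on_def by (simp only: conj_assoc)

lemma ultrafilter_onD:
  assumes "ultrafilter_on D A"
  shows "A \<in> D" "{} \<notin> D" "X \<in> D \<Longrightarrow> Y \<in> D \<Longrightarrow> X \<inter> Y \<in> D"
    "X \<in> D \<Longrightarrow> X \<subseteq> Y \<Longrightarrow> Y \<subseteq> A \<Longrightarrow> Y \<in> D" "X \<subseteq> A \<Longrightarrow> X \<notin> D \<Longrightarrow> A - X \<in> D"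
  using assms unfolding ultrafilter_on_def by blast+

lemma proper_filter_onI:
  assumes "D \<subseteq> Pow A" "A \<in> D" "{} \<notin> D" "\<And>X Y. X \<in> D \<Longrightarrow> Y \<in> D \<Longrightarrow> X \<inter> Y \<in> D"
    "\<And>X Y. X \<in> D \<Longrightarrow> X \<subseteq> Y \<Longrightarrow> Y \<subseteq> A \<Longrightarrow> Y \<in> D"
  shows "proper_filter_on D A"
  unfolding proper_filter_on_def using assms by simp

lemma proper_filter_onD:
  assumes "proper_filter_on D A"
  shows "D \<subseteq> Pow A" "A \<in> D" "{} \<notin> D" "X \<in> D \<Longrightarrow> Y \<in> D \<Longrightarrow> X \<inter> Y \<in> D"
    "X \<in> D \<Longrightarrow> X \<subseteq> Y \<Longrightarrow> Y \<subseteq> A \<Longrightarrow> Y \<in> D"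
  using assms unfolding proper_filter_on_def by blast+

lemma proper_filter_on_Union_chain:
  assumes C: "C \<in> chains {D. proper_filter_on D A}" and "C \<noteq> {}"
  shows "proper_filter_on (\<Union>C) A"
proof (rule proper_filter_onI)
  have filt: "proper_filter_on D A" if "D \<in> C" for D using C that unfolding chains_def by blast
  note F = proper_filter_onD[OF filt]
  show "\<Union>C \<subseteq> Pow A" "{} \<notin> \<Union>C" using F(1,3) by blast+
  show "A \<in> \<Union>C" using F(2) \<open>C \<noteq> {}\<close> by blast
  show "Y \<in> \<Union>C" if "X \<in> \<Union>C" "X \<subseteq> Y" "Y \<subseteq> A" for X Y using that F(5) by blast
  show "X \<inter> Y \<in> \<Union>C" if XY: "X \<in> \<Union>C" "Y \<in> \<Union>C" for X Y
  proof -
    obtain DX DY where D: "DX \<in> C" "X \<in> DX" "DY \<in> C" "Y \<in> DY" using XY by blast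
    hence "DX \<subseteq> DY \<or> DY \<subseteq> DX" using C unfolding chains_def chain_subset_def by blast
    thus ?thesis using D F(4)[of DX X Y] F(4)[of DY X Y] by blast
  qed
qed

text \<open>A maximal proper filter decides every X: otherwise all its members meet X, and
  adjoining X gives a larger proper filter.\<close>
lemma maximal_proper_filter_on_ultrafilter_on:
  assumes M: "proper_filter_on M A" and max: "\<forall>D. proper_filter_on D A \<and> M \<subseteq> D \<longrightarrow> D = M"
  shows "ultrafilter_on M A"
  unfolding ultrafilter_on_iff
proof (intro conjI allI impI M)
  note MD = proper_filter_onD[OF M]
  fix X assume "X \<subseteq> A"
  show "X \<in> M \<or> A - X \<in> M"
  proof (rule ccontr)
    assume undecided: "\<not> (X \<in> M \<or> A - X \<in> M)"
    have meets: "m \<inter> X \<noteq> {}" if "m \<in> M" for m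
    proof
      assume "m \<inter> X = {}"
      moreover have "m \<subseteq> A" using MD(1) that by blast
      ultimately have "m \<subseteq> A - X" by auto
      hence "A - X \<in> M" using MD(5)[OF that] by blast
      thus False using undecided by blast
    qed
    define M' where "M' = {Y. Y \<subseteq> A \<and> (\<exists>m\<in>M. m \<inter> X \<subseteq> Y)}"
    have "proper_filter_on M' A"
    proof (rule proper_filter_onI)
      show "M' \<subseteq> Pow A" "A \<in> M'" unfolding M'_def using MD(2) by blast+
      show "{} \<notin> M'" unfolding M'_def using meets by blast
      show "Y \<in> M'" if "Z \<in> M'" "Z \<subseteq> Y" "Y \<subseteq> A" for Z Y
        using that unfolding M'_def by blast
      show "Z \<inter> Y \<in> M'" if ZY: "Z \<in> M'" "Y \<in> M'" for Z Y
      proof -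
        obtain m1 m2 where m: "m1 \<in> M" "m1 \<inter> X \<subseteq> Z" "m2 \<in> M" "m2 \<inter> X \<subseteq> Y" "Z \<subseteq> A"
          using ZY unfolding M'_def by blast
        have "m1 \<inter> m2 \<in> M" using MD(4) m(1,3) by blast
        moreover have "(m1 \<inter> m2) \<inter> X \<subseteq> Z \<inter> Y" using m(2,4) by blast
        ultimately show ?thesis unfolding M'_def using m(5) by blast
      qed
    qed
    moreover have "M \<subseteq> M'" using MD(1) unfolding M'_def by blast
    ultimately have "M' = M" using max by blast
    moreover have "X \<in> M'" using MD(2) \<open>X \<subseteq> A\<close> unfolding M'_def by blast
    ultimately show False using undecided by blast
  qed
qed

lemma ultrafilter_on_extends:
  assumes "proper_filter_on D0 A"
  shows "\<exists>D. ultrafilter_on D A \<and> D0 \<subseteq> D"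
proof -
  define S where "S = {D. proper_filter_on D A \<and> D0 \<subseteq> D}"
  have "\<forall>C\<in>chains S. \<exists>U\<in>S. \<forall>X\<in>C. X \<subseteq> U"
  proof
    fix C assume C: "C \<in> chains S"
    show "\<exists>U\<in>S. \<forall>X\<in>C. X \<subseteq> U"
    proof (cases "C = {}")
      case True
      thus ?thesis using assms unfolding S_def by blast
    next
      case False
      have "S \<subseteq> {D. proper_filter_on D A}" unfolding S_def by blast
      hence "C \<in> chains {D. proper_filter_on D A}" using C unfolding chains_def by blast
      hence "proper_filter_on (\<Union>C) A" using False by (rule proper_filter_on_Union_chain)
      moreover obtain D1 where "D1 \<in> C" using False by blast
      hence "D0 \<subseteq> \<Union>C" using chainsD2[OF C] unfolding S_def by blast
      ultimately show ?thesis unfolding S_def by blast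
    qed
  qed
  from Zorn_Lemma2[OF this]
  obtain M where "M \<in> S" and max: "\<forall>X\<in>S. M \<subseteq> X \<longrightarrow> X = M" by blast
  have "ultrafilter_on M A"
  proof (rule maximal_proper_filter_on_ultrafilter_on)
    show "proper_filter_on M A" using \<open>M \<in> S\<close> unfolding S_def by blast
    show "\<forall>D. proper_filter_on D A \<and> M \<subseteq> D \<longrightarrow> D = M"
      using max \<open>M \<in> S\<close> unfolding S_def by blast
  qed
  thus ?thesis using \<open>M \<in> S\<close> unfolding S_def by blast
qed

subsection \<open>Sparse cofinal sets below non-Mahlo limit cardinals\<close>

lemma not_limit_point_bounded:
  fixes a :: "'k::wellorder"
  assumes "infinite_cardinal a" "\<not> limit_point E a"
  shows "\<exists>y<a. \<forall>e\<in>E. e < a \<longrightarrow> e < y"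
proof (cases "\<exists>e\<in>E. e < a")
  case False
  thus ?thesis using bottom_elem_less[OF assms(1)] by blast
next
  case True
  then obtain y where "y < a" and gap: "\<forall>e\<in>E. \<not> (y < e \<and> e < a)"
    using assms(2) unfolding limit_point_def by blast
  have "e < next_elem y" if "e \<in> E" "e < a" for e
    using gap that next_elem_bounds(1)[OF assms(1) \<open>y < a\<close>] by (meson not_less order.strict_trans1)
  thus ?thesis using next_elem_bounds(2)[OF assms(1) \<open>y < a\<close>] by blast
qed

lemma small_unbounded_card_le_seg:
  fixes l :: "'k::wellorder"
  assumes inf: "infinite (seg l)" and M: "unbounded_in M l" and small: "|M| <o |seg l|"
  shows "\<exists>x<l. |M| \<le>o |seg x|"
proof (rule ccontr)
  assume "\<not> ?thesis"
  hence large: "|seg x| \<le>o |M|" if "x < l" for x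
    using that not_ordLeq_iff_ordLess[OF card_of_Well_order card_of_Well_order] ordLess_imp_ordLeq
    by blast
  have M_l: "M \<subseteq> seg l" using M unfolding unbounded_in_def by blast
  have cover: "seg l \<subseteq> M \<union> (\<Union>m\<in>M. seg m)"
  proof
    fix y assume "y \<in> seg l"
    then obtain s where "s \<in> M" "y \<le> s" using M unfolding unbounded_in_def seg_def by blast
    thus "y \<in> M \<union> (\<Union>m\<in>M. seg m)" unfolding seg_def by (cases "y = s") (auto simp: order.order_iff_strict)
  qed
  have "infinite M"
  proof
    assume "finite M"
    moreover have "finite (seg m)" if "m \<in> M" for m
      using card_of_ordLeq_finite[OF large \<open>finite M\<close>] that M_l unfolding seg_def by blast
    ultimately have "finite (seg l)" using cover finite_subset by blast
    thus False using inf by blast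
  qed
  have "|\<Union>m\<in>M. seg m| \<le>o |M|"
  proof (rule card_of_UNION_ordLeq_infinite[OF \<open>infinite M\<close>])
    show "|M| \<le>o |M|" by (rule ordLeq_refl[OF card_of_Card_order])
    show "\<forall>m\<in>M. |seg m| \<le>o |M|" using large M_l unfolding seg_def by blast
  qed
  hence "|M \<union> (\<Union>m\<in>M. seg m)| \<le>o |M|"
    by (intro card_of_Un_ordLeq_infinite_Field)
       (auto simp: Field_card_of card_of_card_order_on ordLeq_refl card_of_Well_order \<open>infinite M\<close>)
  hence "|seg l| \<le>o |M|" using ordLeq_transitive[OF card_of_mono1[OF cover]] by blast
  thus False using small not_ordLess_ordLeq by blast
qed

lemma regular_not_mahlo_sparse_cofinal:
  fixes l :: "'k::wellorder"
  assumes "regular l" "limit_cardinal l" "\<not> mahlo l"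
  shows "\<exists>E. limit_point E l \<and> (\<forall>a<l. regular a \<longrightarrow> \<not> limit_point E a)"
proof -
  have "\<not> stationary {a. a < l \<and> regular a} l" using assms unfolding mahlo_def by blast
  then obtain C where C: "club C l" "{a. a < l \<and> regular a} \<inter> C = {}"
    unfolding stationary_def seg_def by blast
  have "limit_point C l" unfolding limit_point_def
    using C(1) bottom_elem_less[OF regular_infinite_cardinal[OF assms(1)]]
    unfolding club_def seg_def by blast
  moreover have "\<not> limit_point C a" if "a < l" "regular a" for a
    using C that unfolding club_def by blast
  ultimately show ?thesis by blast
qed

lemma singular_sparse_cofinal:
  fixes l :: "'k::wellorder"
  assumes l: "infinite_cardinal l" and "\<not> regular l"
  shows "\<exists>E x. x < l \<and> limit_point E l \<and> (\<forall>a. regular a \<longrightarrow> x < a \<longrightarrow> a < l \<longrightarrow> \<not> limit_point E a)"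
proof -
  obtain M where M: "unbounded_in M l" "\<not> |M| =o |seg l|"
    using assms unfolding regular_def by blast
  have M_l: "M \<subseteq> seg l" using M(1) unfolding unbounded_in_def by blast
  hence small: "|M| <o |seg l|"
    using card_of_mono1 M(2) ordLeq_iff_ordLess_or_ordIso by blast
  obtain x where "x < l" and x: "|M| \<le>o |seg x|"
    using small_unbounded_card_le_seg[OF _ M(1) small] l unfolding infinite_cardinal_def by blast
  have "limit_point M l" unfolding limit_point_def
  proof (intro conjI allI impI)
    fix \<beta> assume "\<beta> < l"
    then obtain s where "s \<in> M" "next_elem \<beta> \<le> s"
      using M(1) next_elem_bounds(2)[OF l] unfolding unbounded_in_def by blast
    moreover have "s < l" using \<open>s \<in> M\<close> M_l unfolding seg_def by blast
    ultimately show "\<exists>a\<in>M. \<beta> < a \<and> a < l"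
      using next_elem_bounds(1)[OF l \<open>\<beta> < l\<close>] order.strict_trans2 by blast
  next
    show "\<exists>a\<in>M. a < l"
      using M(1) bottom_elem_less[OF l] M_l unfolding unbounded_in_def seg_def by blast
  qed
  moreover have "\<not> limit_point M a" if a: "regular a" "x < a" "a < l" for a
  proof
    assume "limit_point M a"
    hence "unbounded_in (M \<inter> seg a) a"
      unfolding limit_point_def unbounded_in_def seg_def by (blast intro: less_imp_le)
    hence "|M \<inter> seg a| =o |seg a|" using a(1) unfolding regular_def by blast
    moreover have "|M \<inter> seg a| <o |seg a|"
    proof -
      have "|M \<inter> seg a| \<le>o |M|" by (rule card_of_mono1) blast
      also note x
      also have "|seg x| <o |seg a|" by (rule card_of_seg_less[OF regular_is_cardinal[OF a(1)] a(2)])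
      finally show ?thesis .
    qed
    ultimately show False using not_ordLess_ordIso by blast
  qed
  ultimately show ?thesis using \<open>x < l\<close> by blast
qed

lemma not_mahlo_sparse_cofinal:
  fixes l :: "'k::wellorder"
  assumes "limit_cardinal l" "\<not> mahlo l"
  shows "\<exists>E x. x < l \<and> limit_point E l \<and> (\<forall>a. regular a \<longrightarrow> x < a \<longrightarrow> a < l \<longrightarrow> \<not> limit_point E a)"
proof (cases "regular l")
  case True
  have "bottom_elem < l" using bottom_elem_less[OF regular_infinite_cardinal[OF True]] .
  thus ?thesis using regular_not_mahlo_sparse_cofinal[OF True assms] by blast
next
  case False
  thus ?thesis using singular_sparse_cofinal assms(1) unfolding limit_cardinal_def by blast
qed

subsection \<open>Limit points of A in pcf(A)\<close>

definition tail_filter :: "'k::wellorder set \<Rightarrow> 'k \<Rightarrow> 'k set set" where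
  "tail_filter A l = {X. X \<subseteq> A \<and> (\<exists>\<beta><l. {a\<in>A. \<beta> < a \<and> a < l} \<subseteq> X)}"

lemma tail_in_tail_filter: "\<beta> < l \<Longrightarrow> {a\<in>A. \<beta> < a \<and> a < l} \<in> tail_filter A l"
  unfolding tail_filter_def by blast

lemma proper_filter_on_tail_filter:
  assumes lp: "limit_point A l"
  shows "proper_filter_on (tail_filter A l) A"
proof (rule proper_filter_onI)
  show "tail_filter A l \<subseteq> Pow A" unfolding tail_filter_def by blast
  obtain a where "a \<in> A" "a < l" using lp unfolding limit_point_def by blast
  thus "A \<in> tail_filter A l" unfolding tail_filter_def by blast
  show "{} \<notin> tail_filter A l"
  proof
    assume "{} \<in> tail_filter A l"
    then obtain \<beta> where "\<beta> < l" "{a\<in>A. \<beta> < a \<and> a < l} \<subseteq> {}" unfolding tail_filter_def by blast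
    moreover obtain a where "a \<in> A" "\<beta> < a" "a < l" using lp \<open>\<beta> < l\<close> unfolding limit_point_def by blast
    ultimately show False by blast
  qed
  show "X \<inter> Y \<in> tail_filter A l" if XY: "X \<in> tail_filter A l" "Y \<in> tail_filter A l" for X Y
  proof -
    obtain \<beta>1 \<beta>2 where "\<beta>1 < l" "{a\<in>A. \<beta>1 < a \<and> a < l} \<subseteq> X" "\<beta>2 < l" "{a\<in>A. \<beta>2 < a \<and> a < l} \<subseteq> Y"
      and "X \<subseteq> A" using XY unfolding tail_filter_def by blast
    moreover have "max \<beta>1 \<beta>2 < l" using \<open>\<beta>1 < l\<close> \<open>\<beta>2 < l\<close> by simp
    moreover have "{a\<in>A. max \<beta>1 \<beta>2 < a \<and> a < l} \<subseteq> X \<inter> Y" using calculation by auto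
    ultimately show ?thesis unfolding tail_filter_def by blast
  qed
  show "Y \<in> tail_filter A l" if "X \<in> tail_filter A l" "X \<subseteq> Y" "Y \<subseteq> A" for X Y
    using that unfolding tail_filter_def by blast
qed

text \<open>At a \<in> A between x and l, E \<inter> a is bounded by some y < a, so only the functions f \<alpha> with
  \<alpha> < y matter; there are fewer than a of them, and a is regular.\<close>
lemma sparse_cofinal_bound:
  fixes l x :: "'k::wellorder"
  assumes regA: "\<forall>a\<in>A. regular a" and f: "\<forall>\<alpha><l. f \<alpha> \<in> prodA A"
    and sparse: "\<forall>a\<in>A. x < a \<longrightarrow> a < l \<longrightarrow> \<not> limit_point E a"
  shows "\<exists>h\<in>prodA A. \<forall>a\<in>A. x < a \<longrightarrow> a < l \<longrightarrow> (\<forall>\<alpha> e. e \<in> E \<longrightarrow> \<alpha> < e \<longrightarrow> e < a \<longrightarrow> f \<alpha> a < h a)"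
proof -
  have "\<exists>t<a. \<forall>\<alpha> e. e \<in> E \<longrightarrow> \<alpha> < e \<longrightarrow> e < a \<longrightarrow> f \<alpha> a < t"
    if a: "a \<in> A" "x < a" "a < l" for a
  proof -
    have reg: "regular a" using regA a(1) by blast
    obtain y where "y < a" and y: "\<forall>e\<in>E. e < a \<longrightarrow> e < y"
      using not_limit_point_bounded[OF regular_infinite_cardinal[OF reg]] sparse a by blast
    have "\<exists>t<a. \<forall>\<alpha>\<in>seg y. f \<alpha> a < t"
    proof (rule regular_bounded_image[OF reg])
      show "|seg y| <o |seg a|" by (rule card_of_seg_less[OF regular_is_cardinal[OF reg] \<open>y < a\<close>])
      have "\<alpha> < l" if "\<alpha> < y" for \<alpha> using that \<open>y < a\<close> a(3) by (meson order.strict_trans)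
      thus "\<forall>\<alpha>\<in>seg y. f \<alpha> a < a" using f a(1) prodA_less unfolding seg_def by blast
    qed
    moreover have "\<alpha> \<in> seg y" if "e \<in> E" "\<alpha> < e" "e < a" for \<alpha> e
    proof -
      have "e < y" using y that(1,3) by blast
      thus ?thesis using that(2) unfolding seg_def by simp
    qed
    ultimately show ?thesis by blast
  qed
  then obtain t where t: "\<forall>a\<in>A. x < a \<longrightarrow> a < l \<longrightarrow>
      t a < a \<and> (\<forall>\<alpha> e. e \<in> E \<longrightarrow> \<alpha> < e \<longrightarrow> e < a \<longrightarrow> f \<alpha> a < t a)"
    by metis
  define h where "h = restrict (\<lambda>a. if x < a \<and> a < l then t a else bottom_elem) A"
  have "h \<in> prodA A" unfolding h_def
  proof (rule restrict_in_prodA, intro ballI)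
    fix a assume "a \<in> A"
    hence "infinite_cardinal a" using regA regular_infinite_cardinal by blast
    thus "(if x < a \<and> a < l then t a else bottom_elem) < a"
      using t \<open>a \<in> A\<close> bottom_elem_less[of a] by simp
  qed
  moreover have "\<forall>a\<in>A. x < a \<longrightarrow> a < l \<longrightarrow> (\<forall>\<alpha> e. e \<in> E \<longrightarrow> \<alpha> < e \<longrightarrow> e < a \<longrightarrow> f \<alpha> a < h a)"
    unfolding h_def using t by simp
  ultimately show ?thesis by blast
qed

text \<open>Enumerate the family as f \<alpha>, \<alpha> < l; the bound from sparse_cofinal_bound exceeds f \<alpha> on a
  tail of A \<inter> l, and tails belong to D.\<close>
lemma card_of_cofinal_mod_tail_filter:
  fixes l x :: "'k::wellorder"
  assumes regA: "\<forall>a\<in>A. regular a" and D: "ultrafilter_on D A" "tail_filter A l \<subseteq> D"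
    and E: "limit_point E l" and "x < l" and sparse: "\<forall>a\<in>A. x < a \<longrightarrow> a < l \<longrightarrow> \<not> limit_point E a"
    and cof: "cofinal_mod D A C"
  shows "|seg l| <o |C|"
proof (rule ccontr)
  assume "\<not> |seg l| <o |C|"
  hence le: "|C| \<le>o |seg l|"
    using not_ordLess_iff_ordLeq[OF card_of_Well_order card_of_Well_order] by blast
  have CA: "C \<subseteq> prodA A" and dominating: "\<forall>g\<in>prodA A. \<exists>f\<in>C. {a\<in>A. g a < f a} \<in> D"
    using cof unfolding cofinal_mod_def by blast+
  have "C \<noteq> {}" using dominating bottom_in_prodA[OF regA] by blast
  then obtain f where f: "f ` seg l = C" using iffD2[OF card_of_ordLeq2 le] by blast
  have "\<forall>\<alpha><l. f \<alpha> \<in> prodA A" using f CA unfolding seg_def by blast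
  then obtain h where "h \<in> prodA A"
    and h: "\<forall>a\<in>A. x < a \<longrightarrow> a < l \<longrightarrow> (\<forall>\<alpha> e. e \<in> E \<longrightarrow> \<alpha> < e \<longrightarrow> e < a \<longrightarrow> f \<alpha> a < h a)"
    using sparse_cofinal_bound[OF regA _ sparse] by blast
  then obtain \<alpha> where "\<alpha> < l" and dom: "{a\<in>A. h a < f \<alpha> a} \<in> D"
    using dominating f unfolding seg_def by blast
  obtain e where "e \<in> E" "max \<alpha> x < e" "e < l"
    using E \<open>\<alpha> < l\<close> \<open>x < l\<close> unfolding limit_point_def by (metis max_less_iff_conj)
  hence "{a\<in>A. e < a \<and> a < l} \<in> D" using D(2) tail_in_tail_filter by blast
  hence "{a\<in>A. h a < f \<alpha> a} \<inter> {a\<in>A. e < a \<and> a < l} \<noteq> {}"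
    using ultrafilter_onD(2,3)[OF D(1)] dom by metis
  then obtain a where a: "a \<in> A" "h a < f \<alpha> a" "e < a" "a < l" by blast
  have "x < a" "\<alpha> < e" using \<open>max \<alpha> x < e\<close> a(3) by auto
  hence "f \<alpha> a < h a" using h a \<open>e \<in> E\<close> by blast
  thus False using a(2) by simp
qed

lemma cofinal_mod_supported_below:
  fixes l :: "'k::wellorder"
  assumes regA: "\<forall>a\<in>A. regular a" and D: "ultrafilter_on D A" "tail_filter A l \<subseteq> D"
    and lp: "limit_point A l"
  shows "cofinal_mod D A {g\<in>prodA A. \<forall>a\<in>A. \<not> a < l \<longrightarrow> g a = bottom_elem}"
  unfolding cofinal_mod_def
proof (intro conjI ballI)
  show "{g\<in>prodA A. \<forall>a\<in>A. \<not> a < l \<longrightarrow> g a = bottom_elem} \<subseteq> prodA A" by blast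
  fix f assume f: "f \<in> prodA A"
  define g where "g = restrict (\<lambda>a. if a < l then next_elem (f a) else bottom_elem) A"
  have "g \<in> prodA A" unfolding g_def
  proof (rule restrict_in_prodA, intro ballI)
    fix a assume "a \<in> A"
    hence a: "infinite_cardinal a" using regA regular_infinite_cardinal by blast
    thus "(if a < l then next_elem (f a) else bottom_elem) < a"
      using next_elem_bounds(2)[OF a prodA_less[OF f \<open>a \<in> A\<close>]] bottom_elem_less[OF a] by simp
  qed
  hence "g \<in> {g\<in>prodA A. \<forall>a\<in>A. \<not> a < l \<longrightarrow> g a = bottom_elem}" unfolding g_def by simp
  moreover obtain a0 where "a0 \<in> A" "a0 < l" using lp unfolding limit_point_def by blast
  have "{a\<in>A. a0 < a \<and> a < l} \<subseteq> {a\<in>A. f a < g a}"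
  proof
    fix a assume a: "a \<in> {a\<in>A. a0 < a \<and> a < l}"
    hence "infinite_cardinal a" "f a < a" using regA regular_infinite_cardinal prodA_less[OF f] by auto
    thus "a \<in> {a\<in>A. f a < g a}" unfolding g_def using a next_elem_bounds(1) by simp
  qed
  hence "{a\<in>A. f a < g a} \<in> D"
    using ultrafilter_onD(4)[OF D(1)] D(2) tail_in_tail_filter[OF \<open>a0 < l\<close>] by blast
  ultimately show "\<exists>g\<in>{g\<in>prodA A. \<forall>a\<in>A. \<not> a < l \<longrightarrow> g a = bottom_elem}. {a\<in>A. f a < g a} \<in> D"
    by blast
qed

lemma card_of_supported_below_le_Pow:
  fixes l :: "'k::wellorder"
  shows "|{g\<in>prodA A. \<forall>a\<in>A. \<not> a < l \<longrightarrow> g a = bottom_elem}| \<le>o |Pow (seg l \<times> seg l)|"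
proof -
  let ?C = "{g\<in>prodA A. \<forall>a\<in>A. \<not> a < l \<longrightarrow> g a = bottom_elem}"
  have "inj_on (\<lambda>g. restrict g (A \<inter> seg l)) ?C"
  proof (rule inj_onI)
    fix g1 g2 assume g: "g1 \<in> ?C" "g2 \<in> ?C" and same: "restrict g1 (A \<inter> seg l) = restrict g2 (A \<inter> seg l)"
    have "g1 \<in> extensional A" "g2 \<in> extensional A" using g unfolding prodA_def by (auto simp: PiE_def)
    thus "g1 = g2"
    proof (rule extensionalityI)
      fix a assume "a \<in> A"
      show "g1 a = g2 a"
      proof (cases "a < l")
        case True
        thus ?thesis using same \<open>a \<in> A\<close> unfolding seg_def by (metis IntI mem_Collect_eq restrict_apply')
      next
        case False
        thus ?thesis using g \<open>a \<in> A\<close> by simp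
      qed
    qed
  qed
  hence "|?C| \<le>o |(\<lambda>g. restrict g (A \<inter> seg l)) ` ?C|" using card_of_ordLeq by blast
  also have "|(\<lambda>g. restrict g (A \<inter> seg l)) ` ?C| \<le>o |Pow (seg l \<times> seg l)|"
    by (rule card_of_restrict_prodA_le_Pow) blast
  finally show ?thesis .
qed

lemma card_of_Pow_Times_seg:
  fixes l :: "'k::wellorder"
  assumes "infinite (seg l)"
  shows "|Pow (seg l \<times> seg l)| =o |Pow (seg l)|"
proof -
  obtain f where "bij_betw f (seg l \<times> seg l) (seg l)"
    using card_of_Times_same_infinite[OF assms] card_of_ordIso by blast
  hence "bij_betw (image f) (Pow (seg l \<times> seg l)) (Pow (seg l))" by (rule bij_betw_Pow)
  thus ?thesis using card_of_ordIso by blast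
qed

lemma limit_point_in_pcf:
  fixes \<kappa> l :: "'k::wellorder"
  assumes regA: "\<forall>a\<in>A. regular a" and "two_pow_is_succ l" and "\<not> mahlo l"
    and reg: "regular \<kappa>" and "l < \<kappa>" and lp: "limit_point A l"
    and \<kappa>_le: "|seg \<kappa>| \<le>o |Pow (seg l \<times> seg l)|"
  shows "\<kappa> \<in> pcf A"
proof -
  have lc: "limit_cardinal l" by (rule limit_point_limit_cardinal[OF regA lp])
  hence "infinite (seg l)" unfolding limit_cardinal_def infinite_cardinal_def by blast
  hence Pow_l: "|Pow (seg l \<times> seg l)| =o cardSuc |seg l|"
    using card_of_Pow_Times_seg \<open>two_pow_is_succ l\<close> ordIso_transitive
    unfolding two_pow_is_succ_def by blast
  have "cardSuc |seg l| \<le>o |seg \<kappa>|"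
    using card_of_seg_less[OF regular_is_cardinal[OF reg] \<open>l < \<kappa>\<close>]
      cardSuc_ordLess_ordLeq[OF card_of_Card_order card_of_Card_order] by blast
  hence \<kappa>_succ: "|seg \<kappa>| =o cardSuc |seg l|"
    using ordLeq_ordIso_trans[OF \<kappa>_le Pow_l] ordIso_iff_ordLeq by blast
  obtain D where D: "ultrafilter_on D A" "tail_filter A l \<subseteq> D"
    using ultrafilter_on_extends[OF proper_filter_on_tail_filter[OF lp]] by blast
  obtain E x where "x < l" "limit_point E l" and sparse: "\<forall>a. regular a \<longrightarrow> x < a \<longrightarrow> a < l \<longrightarrow> \<not> limit_point E a"
    using not_mahlo_sparse_cofinal[OF lc \<open>\<not> mahlo l\<close>] by blast
  have lower: "|seg \<kappa>| \<le>o |C|" if "cofinal_mod D A C" for C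
  proof -
    have "|seg l| <o |C|"
      using card_of_cofinal_mod_tail_filter[OF regA D \<open>limit_point E l\<close> \<open>x < l\<close> _ that] sparse regA
      by blast
    hence "cardSuc |seg l| \<le>o |C|" using cardSuc_ordLess_ordLeq[OF card_of_Card_order card_of_Card_order] by blast
    thus ?thesis using ordIso_ordLeq_trans[OF \<kappa>_succ] by blast
  qed
  let ?C = "{g\<in>prodA A. \<forall>a\<in>A. \<not> a < l \<longrightarrow> g a = bottom_elem}"
  have cof: "cofinal_mod D A ?C" by (rule cofinal_mod_supported_below[OF regA D lp])
  have "|?C| \<le>o |seg \<kappa>|"
    using ordLeq_ordIso_trans[OF ordLeq_ordIso_trans[OF card_of_supported_below_le_Pow Pow_l]
        ordIso_symmetric[OF \<kappa>_succ]] .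
  hence "|?C| =o |seg \<kappa>|" using lower[OF cof] ordIso_iff_ordLeq by blast
  thus ?thesis unfolding pcf_def using regular_is_cardinal[OF reg] D(1) cof lower by blast
qed

subsection \<open>Elements of A in pcf(A)\<close>

lemma card_of_cofinal_mod_principal:
  fixes \<kappa> :: "'k::wellorder"
  assumes regA: "\<forall>a\<in>A. regular a" and "\<kappa> \<in> A" and cof: "cofinal_mod {X. X \<subseteq> A \<and> \<kappa> \<in> X} A C"
  shows "|seg \<kappa>| \<le>o |C|"
proof -
  have "unbounded_in ((\<lambda>g. g \<kappa>) ` C) \<kappa>" unfolding unbounded_in_def
  proof (intro conjI allI impI)
    show "(\<lambda>g. g \<kappa>) ` C \<subseteq> seg \<kappa>"
      using cof prodA_less \<open>\<kappa> \<in> A\<close> unfolding cofinal_mod_def seg_def by blast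
    fix y assume "y < \<kappa>"
    have "restrict (\<lambda>a. if a = \<kappa> then y else bottom_elem) A \<in> prodA A"
    proof (rule restrict_in_prodA, intro ballI)
      fix a assume "a \<in> A"
      hence "bottom_elem < a" using regA bottom_elem_less regular_infinite_cardinal by blast
      thus "(if a = \<kappa> then y else bottom_elem) < a" using \<open>y < \<kappa>\<close> by simp
    qed
    then obtain g where "g \<in> C" "\<kappa> \<in> {a\<in>A. restrict (\<lambda>a. if a = \<kappa> then y else bottom_elem) A a < g a}"
      using cof unfolding cofinal_mod_def by blast
    hence "y < g \<kappa>" using \<open>\<kappa> \<in> A\<close> by simp
    thus "\<exists>s\<in>(\<lambda>g. g \<kappa>) ` C. y \<le> s" using \<open>g \<in> C\<close> less_imp_le by blast
  qed
  hence "|(\<lambda>g. g \<kappa>) ` C| =o |seg \<kappa>|" using regA \<open>\<kappa> \<in> A\<close> unfolding regular_def by blast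
  thus ?thesis using ordIso_ordLeq_trans[OF ordIso_symmetric card_of_image] by blast
qed

lemma principal_in_pcf:
  fixes \<kappa> :: "'k::wellorder"
  assumes regA: "\<forall>a\<in>A. regular a" and "\<kappa> \<in> A"
  shows "\<kappa> \<in> pcf A"
proof -
  let ?D = "{X. X \<subseteq> A \<and> \<kappa> \<in> X}"
  have uf: "ultrafilter_on ?D A" unfolding ultrafilter_on_def using \<open>\<kappa> \<in> A\<close> by auto
  have \<kappa>: "infinite_cardinal \<kappa>" using regA \<open>\<kappa> \<in> A\<close> regular_infinite_cardinal by blast
  define g where "g \<alpha> = restrict (\<lambda>a. if a = \<kappa> then \<alpha> else bottom_elem) A" for \<alpha> :: 'k
  have g_\<kappa>: "g \<alpha> \<kappa> = \<alpha>" for \<alpha> unfolding g_def using \<open>\<kappa> \<in> A\<close> by simp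
  have g_prodA: "g \<alpha> \<in> prodA A" if "\<alpha> < \<kappa>" for \<alpha> unfolding g_def
  proof (rule restrict_in_prodA, intro ballI)
    fix a assume "a \<in> A"
    hence "bottom_elem < a" using regA bottom_elem_less regular_infinite_cardinal by blast
    thus "(if a = \<kappa> then \<alpha> else bottom_elem) < a" using that by simp
  qed
  have "inj_on g (seg \<kappa>)" by (rule inj_onI) (metis g_\<kappa>)
  hence "|g ` seg \<kappa>| =o |seg \<kappa>|"
    using card_of_ordIso inj_on_imp_bij_betw ordIso_symmetric by blast
  moreover have "cofinal_mod ?D A (g ` seg \<kappa>)" unfolding cofinal_mod_def
  proof (intro conjI ballI)
    show "g ` seg \<kappa> \<subseteq> prodA A" using g_prodA unfolding seg_def by blast
    fix f assume "f \<in> prodA A"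
    hence "f \<kappa> < \<kappa>" using prodA_less \<open>\<kappa> \<in> A\<close> by blast
    hence "g (next_elem (f \<kappa>)) \<in> g ` seg \<kappa>" "f \<kappa> < g (next_elem (f \<kappa>)) \<kappa>"
      using next_elem_bounds[OF \<kappa>] g_\<kappa> unfolding seg_def by auto
    thus "\<exists>h\<in>g ` seg \<kappa>. {a\<in>A. f a < h a} \<in> ?D" using \<open>\<kappa> \<in> A\<close> by blast
  qed
  ultimately show ?thesis unfolding pcf_def
    using regular_is_cardinal regA \<open>\<kappa> \<in> A\<close> uf card_of_cofinal_mod_principal[OF regA \<open>\<kappa> \<in> A\<close>] by blast
qed

lemma spec_subset_pcf_Un_lim_pts:
  fixes A :: "'k::wellorder set"
  assumes gch: "\<forall>\<mu>::'k. limit_cardinal \<mu> \<longrightarrow> two_pow_is_succ \<mu>" and no_mahlo: "\<forall>\<mu>::'k. \<not> mahlo \<mu>"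
    and regA: "\<forall>a\<in>A. regular a"
  shows "spec A \<subseteq> pcf A \<union> lim_pts A"
proof
  fix \<kappa> assume \<kappa>: "\<kappa> \<in> spec A"
  show "\<kappa> \<in> pcf A \<union> lim_pts A"
  proof (cases "\<kappa> \<in> A \<or> limit_point A \<kappa>")
    case True
    thus ?thesis using principal_in_pcf[OF regA] unfolding lim_pts_def by blast
  next
    case False
    then obtain l where "l < \<kappa>" "limit_point A l" "|seg \<kappa>| \<le>o |Pow (seg l \<times> seg l)|"
      using spec_not_lim_pts_le_Pow[OF regA \<kappa>] by blast
    moreover have "regular \<kappa>" using \<kappa> unfolding spec_def by blast
    moreover have "two_pow_is_succ l"
      using gch limit_point_limit_cardinal[OF regA \<open>limit_point A l\<close>] by blast
    ultimately show ?thesis using limit_point_in_pcf[OF regA] no_mahlo by blast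
  qed
qed

subsection \<open>pcf(A) is contained in spec(A)\<close>

lemma cofinal_mod_infinite:
  fixes A :: "'k::wellorder set"
  assumes regA: "\<forall>a\<in>A. regular a" and D: "ultrafilter_on D A" and cof: "cofinal_mod D A C"
  shows "infinite C"
proof
  assume "finite C"
  have CA: "C \<subseteq> prodA A" and dominating: "\<forall>f\<in>prodA A. \<exists>g\<in>C. {a\<in>A. f a < g a} \<in> D"
    using cof unfolding cofinal_mod_def by blast+
  hence "C \<noteq> {}" using bottom_in_prodA[OF regA] by blast
  define h where "h = restrict (\<lambda>a. next_elem (Max ((\<lambda>g. g a) ` C))) A"
  have max_less: "Max ((\<lambda>g. g a) ` C) < a" if "a \<in> A" for a
  proof -
    have "\<forall>g\<in>C. g a < a" using CA prodA_less that by blast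
    thus ?thesis using \<open>finite C\<close> \<open>C \<noteq> {}\<close> by simp
  qed
  have "h \<in> prodA A" unfolding h_def
  proof (rule restrict_in_prodA, intro ballI)
    fix a assume "a \<in> A"
    hence "infinite_cardinal a" using regA regular_infinite_cardinal by blast
    thus "next_elem (Max ((\<lambda>g. g a) ` C)) < a" using next_elem_bounds(2) max_less \<open>a \<in> A\<close> by blast
  qed
  then obtain g where "g \<in> C" and "{a\<in>A. h a < g a} \<in> D" using dominating by blast
  moreover have "g a < h a" if "a \<in> A" for a
  proof -
    have "g a \<le> Max ((\<lambda>g. g a) ` C)" using \<open>finite C\<close> \<open>g \<in> C\<close> by simp
    also have "\<dots> < next_elem (Max ((\<lambda>g. g a) ` C))"
      using next_elem_bounds(1) max_less that regA regular_infinite_cardinal by blast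
    finally show ?thesis unfolding h_def using that by simp
  qed
  hence "{a\<in>A. h a < g a} = {}" by (auto dest: order.asym)
  ultimately show False using ultrafilter_onD(2)[OF D] by simp
qed

lemma cofinal_mod_not_bounded_in_prod:
  assumes D: "ultrafilter_on D A" and cof: "cofinal_mod D A G"
  shows "\<not> bounded_in_prod A G"
proof
  assume "bounded_in_prod A G"
  then obtain h where "h \<in> prodA A" and h: "\<forall>g\<in>G. \<forall>a\<in>A. g a < h a"
    unfolding bounded_in_prod_def by blast
  then obtain g where "g \<in> G" "{a\<in>A. h a < g a} \<in> D" using cof unfolding cofinal_mod_def by blast
  moreover have "{a\<in>A. h a < g a} = {}" using h \<open>g \<in> G\<close> by (auto dest: order.asym)
  ultimately show False using ultrafilter_onD(2)[OF D] by simp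
qed

lemma unbounded_in_if_card_of_ge:
  fixes \<kappa> :: "'k::wellorder"
  assumes "is_cardinal \<kappa>" "S \<subseteq> seg \<kappa>" "|seg \<kappa>| \<le>o |S|"
  shows "unbounded_in S \<kappa>"
  unfolding unbounded_in_def
proof (intro conjI allI impI \<open>S \<subseteq> seg \<kappa>\<close>)
  fix y assume "y < \<kappa>"
  show "\<exists>s\<in>S. y \<le> s"
  proof (rule ccontr)
    assume "\<not> ?thesis"
    hence "S \<subseteq> seg y" using assms(2) unfolding seg_def by (auto simp: not_le)
    hence "|S| <o |seg \<kappa>|"
      using ordLeq_ordLess_trans[OF card_of_mono1 card_of_seg_less[OF assms(1) \<open>y < \<kappa>\<close>]] by blast
    thus False using assms(3) not_ordLess_ordLeq by blast
  qed
qed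

text \<open>Fewer than \<kappa> = cf(\<Pi>A/D) functions are not cofinal, so some u is not dominated by any of
  them, and D is an ultrafilter.\<close>
lemma pcf_upper_bound:
  assumes "ultrafilter_on D A" "is_cardinal \<kappa>" and min: "\<forall>C. cofinal_mod D A C \<longrightarrow> |seg \<kappa>| \<le>o |C|"
    and e: "\<forall>\<beta><\<kappa>. e \<beta> \<in> prodA A" and "\<alpha> < \<kappa>"
  shows "\<exists>u\<in>prodA A. \<forall>\<beta><\<alpha>. {a\<in>A. e \<beta> a \<le> u a} \<in> D"
proof -
  have "|e ` seg \<alpha>| <o |seg \<kappa>|"
    using ordLeq_ordLess_trans[OF card_of_image card_of_seg_less[OF assms(2,5)]] .
  hence "\<not> cofinal_mod D A (e ` seg \<alpha>)" using min not_ordLess_ordLeq by blast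
  moreover have "e ` seg \<alpha> \<subseteq> prodA A"
    using e \<open>\<alpha> < \<kappa>\<close> order.strict_trans unfolding seg_def by blast
  ultimately obtain u where "u \<in> prodA A" and "\<not> (\<exists>g\<in>e ` seg \<alpha>. {a\<in>A. u a < g a} \<in> D)"
    unfolding cofinal_mod_def by blast
  hence u: "\<forall>\<beta><\<alpha>. {a\<in>A. u a < e \<beta> a} \<notin> D" unfolding seg_def by blast
  have "{a\<in>A. e \<beta> a \<le> u a} \<in> D" if "\<beta> < \<alpha>" for \<beta>
  proof -
    have "A - {a\<in>A. u a < e \<beta> a} \<in> D"
      by (rule ultrafilter_onD(5)[OF assms(1)]) (use u that in auto)
    moreover have "A - {a\<in>A. u a < e \<beta> a} = {a\<in>A. e \<beta> a \<le> u a}" by (auto simp: not_less)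
    ultimately show ?thesis by simp
  qed
  thus ?thesis using \<open>u \<in> prodA A\<close> by blast
qed

text \<open>From a cofinal family e of minimal size \<kappa>, f \<alpha> is the pointwise maximum of e \<alpha> and a
  \<le>_D-bound of all e \<beta>, \<beta> < \<alpha>.\<close>
lemma pcf_scale:
  assumes "\<kappa> \<in> pcf A"
  obtains D f where "ultrafilter_on D A" "\<forall>\<alpha><\<kappa>. f \<alpha> \<in> prodA A"
    "\<And>S. unbounded_in S \<kappa> \<Longrightarrow> cofinal_mod D A (f ` S)"
    "\<forall>C. cofinal_mod D A C \<longrightarrow> |seg \<kappa>| \<le>o |C|" "\<exists>C. cofinal_mod D A C \<and> |C| =o |seg \<kappa>|"
proof -
  obtain D C where card: "is_cardinal \<kappa>" and D: "ultrafilter_on D A" and cof: "cofinal_mod D A C"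
    and C: "|C| =o |seg \<kappa>|" and min: "\<forall>C. cofinal_mod D A C \<longrightarrow> |seg \<kappa>| \<le>o |C|"
    using assms unfolding pcf_def by blast
  obtain e where e: "bij_betw e (seg \<kappa>) C" using ordIso_symmetric[OF C] card_of_ordIso by blast
  have e_prodA: "\<forall>\<beta><\<kappa>. e \<beta> \<in> prodA A" using e cof unfolding bij_betw_def cofinal_mod_def seg_def by blast
  obtain u where u: "\<forall>\<alpha><\<kappa>. u \<alpha> \<in> prodA A \<and> (\<forall>\<beta><\<alpha>. {a\<in>A. e \<beta> a \<le> u \<alpha> a} \<in> D)"
    using pcf_upper_bound[OF D card min e_prodA] by metis
  define f where "f \<alpha> = restrict (\<lambda>a. max (u \<alpha> a) (e \<alpha> a)) A" for \<alpha>
  have f_prodA: "\<forall>\<alpha><\<kappa>. f \<alpha> \<in> prodA A"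
  proof (intro allI impI)
    fix \<alpha> assume "\<alpha> < \<kappa>"
    hence "u \<alpha> \<in> prodA A" "e \<alpha> \<in> prodA A" using u e_prodA by blast+
    thus "f \<alpha> \<in> prodA A" unfolding f_def using prodA_less by (intro restrict_in_prodA) auto
  qed
  have above_e: "{a\<in>A. e \<beta> a \<le> f \<alpha> a} \<in> D" if "\<beta> \<le> \<alpha>" "\<alpha> < \<kappa>" for \<alpha> \<beta>
  proof (cases "\<beta> = \<alpha>")
    case True
    thus ?thesis unfolding f_def using ultrafilter_onD(1)[OF D] by simp
  next
    case False
    hence "{a\<in>A. e \<beta> a \<le> u \<alpha> a} \<in> D" using u that by simp
    moreover have "{a\<in>A. e \<beta> a \<le> u \<alpha> a} \<subseteq> {a\<in>A. e \<beta> a \<le> f \<alpha> a}"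
      unfolding f_def by (auto intro: max.coboundedI1)
    ultimately show ?thesis using ultrafilter_onD(4)[OF D] by blast
  qed
  have "cofinal_mod D A (f ` S)" if S: "unbounded_in S \<kappa>" for S
    unfolding cofinal_mod_def
  proof (intro conjI ballI)
    show "f ` S \<subseteq> prodA A" using S f_prodA unfolding unbounded_in_def seg_def by blast
    fix h assume "h \<in> prodA A"
    then obtain \<gamma> where "\<gamma> < \<kappa>" and dom: "{a\<in>A. h a < e \<gamma> a} \<in> D"
      using cof e unfolding cofinal_mod_def bij_betw_def seg_def by blast
    then obtain s where "s \<in> S" "\<gamma> \<le> s" "s < \<kappa>" using S unfolding unbounded_in_def seg_def by blast
    hence "{a\<in>A. h a < e \<gamma> a} \<inter> {a\<in>A. e \<gamma> a \<le> f s a} \<in> D"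
      using ultrafilter_onD(3)[OF D dom above_e] by blast
    moreover have "{a\<in>A. h a < e \<gamma> a} \<inter> {a\<in>A. e \<gamma> a \<le> f s a} \<subseteq> {a\<in>A. h a < f s a}" by auto
    ultimately have "{a\<in>A. h a < f s a} \<in> D" using ultrafilter_onD(4)[OF D] by blast
    thus "\<exists>g\<in>f ` S. {a\<in>A. h a < g a} \<in> D" using \<open>s \<in> S\<close> by blast
  qed
  thus ?thesis using that D f_prodA min cof C by blast
qed

lemma pcf_subset_spec:
  fixes A :: "'k::wellorder set"
  assumes regA: "\<forall>a\<in>A. regular a"
  shows "pcf A \<subseteq> spec A"
proof
  fix \<kappa> assume "\<kappa> \<in> pcf A"
  hence card: "is_cardinal \<kappa>" unfolding pcf_def by blast
  obtain D f where D: "ultrafilter_on D A" and f: "\<forall>\<alpha><\<kappa>. f \<alpha> \<in> prodA A"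
    and scale: "\<And>S. unbounded_in S \<kappa> \<Longrightarrow> cofinal_mod D A (f ` S)"
    and min: "\<forall>C. cofinal_mod D A C \<longrightarrow> |seg \<kappa>| \<le>o |C|"
    and "\<exists>C. cofinal_mod D A C \<and> |C| =o |seg \<kappa>|"
    by (rule pcf_scale[OF \<open>\<kappa> \<in> pcf A\<close>], rule that, assumption+)
  then obtain C where "cofinal_mod D A C" "|C| =o |seg \<kappa>|" by blast
  hence "infinite (seg \<kappa>)"
    using cofinal_mod_infinite[OF regA D] card_of_ordIso_finite[of C "seg \<kappa>"] by blast
  have unbounded_large: "|seg \<kappa>| \<le>o |S|" if "unbounded_in S \<kappa>" for S
    using ordLeq_transitive[OF min[rule_format, OF scale[OF that]] card_of_image] .
  have "regular \<kappa>" unfolding regular_def infinite_cardinal_def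
  proof (intro conjI allI impI card \<open>infinite (seg \<kappa>)\<close>)
    fix S assume S: "unbounded_in S \<kappa>"
    hence "|S| \<le>o |seg \<kappa>|" using card_of_mono1 unfolding unbounded_in_def by blast
    thus "|S| =o |seg \<kappa>|" using unbounded_large[OF S] ordIso_iff_ordLeq by blast
  qed
  let ?F = "f ` seg \<kappa>"
  have "unbounded_in (seg \<kappa>) \<kappa>" unfolding unbounded_in_def seg_def by blast
  hence "|seg \<kappa>| \<le>o |?F|" using min scale by blast
  hence F: "|?F| =o |seg \<kappa>|" using card_of_image ordIso_iff_ordLeq by blast
  have unbounded: "\<not> bounded_in_prod A G" if G: "G \<subseteq> ?F" "|G| =o |seg \<kappa>|" for G
  proof -
    define S where "S = {\<alpha>\<in>seg \<kappa>. f \<alpha> \<in> G}"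
    have G_S: "G = f ` S" unfolding S_def using G(1) by auto
    have "|G| \<le>o |S|" using card_of_image[of f S] G_S by simp
    hence "|seg \<kappa>| \<le>o |S|" by (rule ordIso_ordLeq_trans[OF ordIso_symmetric[OF G(2)]])
    moreover have "S \<subseteq> seg \<kappa>" unfolding S_def by blast
    ultimately have "unbounded_in S \<kappa>" using unbounded_in_if_card_of_ge[OF card] by blast
    thus ?thesis using cofinal_mod_not_bounded_in_prod[OF D] scale G_S by blast
  qed
  have "?F \<subseteq> prodA A" using f unfolding seg_def by blast
  thus "\<kappa> \<in> spec A" unfolding spec_def using \<open>regular \<kappa>\<close> F unbounded by blast
qed

theorem theorem3p5:
  fixes dummy :: "'k::wellorder"
  shows "((\<forall>\<mu>::'k. limit_cardinal \<mu> \<longrightarrow> two_pow_is_succ \<mu>) \<and> (\<forall>\<mu>::'k. \<not> mahlo \<mu>) \<longrightarrow>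
           (\<forall>A::'k set. (\<forall>a\<in>A. regular a) \<longrightarrow> spec A \<subseteq> pcf A \<union> lim_pts A))
       \<and> ((\<forall>\<mu>::'k. singular \<mu> \<longrightarrow> two_pow_is_succ \<mu>) \<and>
           (\<forall>\<mu>::'k. \<not> (regular \<mu> \<and> limit_cardinal \<mu>)) \<longrightarrow>
           (\<forall>A::'k set. (\<forall>a\<in>A. regular a) \<longrightarrow> spec A = pcf A))"
proof (intro conjI impI allI)
  fix A :: "'k set"
  assume "(\<forall>\<mu>::'k. limit_cardinal \<mu> \<longrightarrow> two_pow_is_succ \<mu>) \<and> (\<forall>\<mu>::'k. \<not> mahlo \<mu>)"
    and "\<forall>a\<in>A. regular a"
  thus "spec A \<subseteq> pcf A \<union> lim_pts A" using spec_subset_pcf_Un_lim_pts by blast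
next
  fix A :: "'k set"
  assume hyp: "(\<forall>\<mu>::'k. singular \<mu> \<longrightarrow> two_pow_is_succ \<mu>) \<and> (\<forall>\<mu>::'k. \<not> (regular \<mu> \<and> limit_cardinal \<mu>))"
    and regA: "\<forall>a\<in>A. regular a"
  have "\<forall>\<mu>::'k. limit_cardinal \<mu> \<longrightarrow> two_pow_is_succ \<mu>"
    using hyp unfolding limit_cardinal_def singular_def by blast
  moreover have "\<forall>\<mu>::'k. \<not> mahlo \<mu>" using hyp unfolding mahlo_def by blast
  ultimately have "spec A \<subseteq> pcf A \<union> lim_pts A" by (rule spec_subset_pcf_Un_lim_pts[OF _ _ regA])
  moreover have "spec A \<inter> lim_pts A = {}"
    using hyp limit_point_limit_cardinal[OF regA] unfolding spec_def lim_pts_def by blast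
  ultimately show "spec A = pcf A" using pcf_subset_spec[OF regA] by blast
qed

end
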